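(* Let $p\in\mathbb N$ and $c$ a constant, and consider the modified Bogoyavlensky lattice $$v'_j=(c-v_j)v_j\,(v_{j+1}\cdots v_{j+p}-v_{j-1}\cdots v_{j-p}),\qquad j\in\mathbb Z.$$ Let constants $b_j,d_j$, $j\in\mathbb Z$, satisfy $b_{j+p}=b_j+1$ and $d_{j+p+1}=d_j+c$, and define $$G_j=t(c-v_j)\Bigl(\sum_{s=0}^p v_{j-p+s}\cdots v_{j+s}-c\sum_{s=1}^p v_{j-p+s}\cdots v_{j+s-1}\Bigr)+b_jv_j-d_j.$$ Then the constraint $G_j=0$ (for all $j\in\mathbb Z$) is consistent with the lattice: the total derivative $\frac{d}{dt}G_j$ computed by virtue of the lattice equations (including the explicit dependence on $t$) vanishes whenever $G_k=0$ for all $k\in\mathbb Z$, so that the set of solutions satisfying all constraints $G_j=0$ is invariant under the flow.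
   Context: $f'=df/dt$. *)

theory Defs
  imports Complex_Main
begin

definition mbog_rhs :: "nat \<Rightarrow> real \<Rightarrow> (int \<Rightarrow> real) \<Rightarrow> int \<Rightarrow> real" where
  "mbog_rhs p c v j =
     (c - v j) * v j * ((\<Prod>i=1..p. v (j + int i)) - (\<Prod>i=1..p. v (j - int i)))"

definition G_constr :: "nat \<Rightarrow> real \<Rightarrow> (int \<Rightarrow> real) \<Rightarrow> (int \<Rightarrow> real) \<Rightarrow> int \<Rightarrow> real
    \<Rightarrow> (int \<Rightarrow> real) \<Rightarrow> real" where
  "G_constr p c b d j t v =
     t * (c - v j) *
       ((\<Sum>s=0..p. \<Prod>i=0..p. v (j - int p + int s + int i))
        - c * (\<Sum>s=1..p. \<Prod>i=0..<p. v (j - int p + int s + int i)))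
     + b j * v j - d j"

text \<open>Total derivative of G_j by virtue of the lattice, at the point (t, v):
  derivative of s \<mapsto> G_j(t + s, v + s F(v)) at s = 0 (G_j depends on finitely many v_k
  polynomially, so this equals \<partial>_t G_j + \<Sum>_k \<partial>G_j/\<partial>v_k F_k(v)).\<close>

end

(* Write W_m and U_m for the products of p + 1 and of p consecutive values v_m, v_(m+1), ...
   Then G_j = t (c - v_j) T_j + b_j v_j - d_j with T_j = sum_(m=j-p..j) W_m - c sum_(m=j-p+1..j) U_m,
   and along the lattice the total derivative of G_j is the combination
     (c - v_j) sum_(m=j-p+1..j) U_m (G_(m+p) - G_(m-1))
   of the constraints, so it vanishes where all G_k do.  The t-free part of this identity is a
   telescoping sum of b_m W_m, using b_(m+p) = b_m + 1 and d_(m+p) = d_(m-1) + c.  For the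
   coefficient of t, v'_k / v_k = phi_(k+1) - phi_k with phi_k = W_k + c U_(k-p) - T_k, so the
   logarithmic derivative of every window product telescopes, and the resulting sums collapse
   because every product of a long and a short window that occurs is a window of length 2p + 1. *)

theory Submission
  imports Defs
begin

definition window :: "(int \<Rightarrow> 'a::comm_monoid_mult) \<Rightarrow> int \<Rightarrow> nat \<Rightarrow> 'a" where
  "window v m n = (\<Prod>i<n. v (m + int i))"

lemma window_add: "window v m (a + b) = window v m a * window v (m + int a) b"
  by (induction b) (simp_all add: window_def algebra_simps)

lemma window_Suc: "window v m (Suc n) = window v m n * v (m + int n)"
  using window_add[of v m n 1] by (simp add: window_def)

lemma window_Suc': "window v m (Suc n) = v m * window v (m + 1) n"
  using window_add[of v m 1 n] by (simp add: window_def)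

lemma window_mult_commute:
  "window v m a * window v (m + int a) b = window v m b * window v (m + int b) a"
  by (simp flip: window_add add: add.commute)

lemma sum_atLeastAtMost_int_offset:
  "(\<Sum>s\<in>{m..n}. f (a + int s)) = (\<Sum>k\<in>{a + int m..a + int n}. f k)"
  by (rule sum.reindex_bij_witness[where i="\<lambda>k. nat (k - a)" and j="\<lambda>s. a + int s"]) auto

lemma sum_atLeastAtMost_int_head:
  assumes "a \<le> b"
  shows "sum f {a..b} = f a + sum f {a + 1..(b::int)}"
proof -
  have "{a..b} = insert a {a + 1..b}"
    using assms by auto
  then show ?thesis
    by simp
qed

lemma sum_atLeastAtMost_int_last_shift:
  assumes "a \<le> b"
  shows "sum f {a..b} = (\<Sum>m\<in>{a + 1..b}. f (m - 1)) + f (b::int)"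
proof -
  have "(\<Sum>m\<in>{a + 1..b}. f (m - 1)) = sum f {a..b - 1}"
    by (rule sum.reindex_bij_witness[where i="\<lambda>m. m + 1" and j="\<lambda>m. m - 1"]) auto
  moreover have "{a..b} = insert b {a..b - 1}"
    using assms by auto
  ultimately show ?thesis
    by (simp add: add.commute)
qed

lemma sum_atLeastAtMost_int_slide:
  fixes f :: "int \<Rightarrow> 'a::ab_group_add"
  assumes "a \<le> b + 1"
  shows "sum f {a + 1..b + 1} = sum f {a..b} + f (b + 1) - f a"
proof -
  have "{a..b + 1} = insert (b + 1) {a..b}"
    using assms by auto
  then show ?thesis
    using sum_atLeastAtMost_int_head[of a "b + 1" f] assms by (simp add: algebra_simps)
qed

lemma sum_atLeastAtMost_int_telescope:
  fixes f :: "int \<Rightarrow> 'a::ab_group_add"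
  assumes "a \<le> b"
  shows "(\<Sum>m\<in>{a + 1..b}. f m - f (m - 1)) = f b - f a"
  using sum_atLeastAtMost_int_head[OF assms, of f]
    sum_atLeastAtMost_int_last_shift[OF assms, of f]
  by (simp add: sum_subtractf algebra_simps)

definition mbog_T :: "nat \<Rightarrow> real \<Rightarrow> (int \<Rightarrow> real) \<Rightarrow> int \<Rightarrow> real" where
  "mbog_T p c v j =
     (\<Sum>m\<in>{j - int p..j}. window v m (Suc p)) - c * (\<Sum>m\<in>{j - int p + 1..j}. window v m p)"

definition mbog_h :: "nat \<Rightarrow> real \<Rightarrow> (int \<Rightarrow> real) \<Rightarrow> int \<Rightarrow> real" where
  "mbog_h p c v k = (c - v k) * (window v (k + 1) p - window v (k - int p) p)"

lemma G_constr_eq_mbog_T: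
  "G_constr p c b d j t v = t * ((c - v j) * mbog_T p c v j) + (b j * v j - d j)"
proof -
  have "(\<Sum>s=0..p. \<Prod>i=0..p. v (j - int p + int s + int i))
      = (\<Sum>m\<in>{j - int p..j}. window v m (Suc p))"
    using sum_atLeastAtMost_int_offset[of "\<lambda>m. window v m (Suc p)" "j - int p" 0 p]
    by (simp add: window_def atLeast0AtMost lessThan_Suc_atMost)
  moreover have "(\<Sum>s=1..p. \<Prod>i=0..<p. v (j - int p + int s + int i))
      = (\<Sum>m\<in>{j - int p + 1..j}. window v m p)"
    using sum_atLeastAtMost_int_offset[of "\<lambda>m. window v m p" "j - int p" 1 p]
    by (simp add: window_def atLeast0LessThan)
  ultimately show ?thesis
    unfolding G_constr_def mbog_T_def by (simp add: algebra_simps)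
qed

lemma mbog_rhs_eq_mult_h: "mbog_rhs p c v k = v k * mbog_h p c v k"
proof -
  have "(\<Prod>i=1..p. v (k + int i)) = window v (k + 1) p"
    unfolding window_def
    by (rule prod.reindex_bij_witness[where i="\<lambda>i. i + 1" and j="\<lambda>i. i - 1"]) auto
  moreover have "(\<Prod>i=1..p. v (k - int i)) = window v (k - int p) p"
    unfolding window_def
    by (rule prod.reindex_bij_witness[where i="\<lambda>i. p - i" and j="\<lambda>i. p - i"]) auto
  ultimately show ?thesis
    by (simp add: mbog_rhs_def mbog_h_def)
qed

lemma mbog_rhs_eq_window_diff:
  "mbog_rhs p c v k = (c - v k) * (window v k (Suc p) - window v (k - int p) (Suc p))"
  using window_Suc'[of v k p] window_Suc[of v "k - int p" p]
  by (simp add: mbog_rhs_eq_mult_h mbog_h_def algebra_simps)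

definition mbog_phi :: "nat \<Rightarrow> real \<Rightarrow> (int \<Rightarrow> real) \<Rightarrow> int \<Rightarrow> real" where
  "mbog_phi p c v k = window v k (Suc p) + c * window v (k - int p) p - mbog_T p c v k"

lemma mbog_phi_succ:
  "mbog_phi p c v (k + 1) = window v (k - int p) (Suc p) + c * window v (k + 1) p - mbog_T p c v k"
proof -
  have W: "(\<Sum>m\<in>{k + 1 - int p..k + 1}. window v m (Suc p))
      = (\<Sum>m\<in>{k - int p..k}. window v m (Suc p)) + window v (k + 1) (Suc p) - window v (k - int p) (Suc p)"
    using sum_atLeastAtMost_int_slide[of "k - int p" k] by (simp add: algebra_simps)
  have U: "(\<Sum>m\<in>{k + 1 - int p + 1..k + 1}. window v m p)
      = (\<Sum>m\<in>{k - int p + 1..k}. window v m p) + window v (k + 1) p - window v (k - int p + 1) p"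
    using sum_atLeastAtMost_int_slide[of "k - int p + 1" k] by (simp add: algebra_simps)
  show ?thesis
    unfolding mbog_phi_def mbog_T_def W U by (simp add: algebra_simps)
qed

lemma mbog_h_eq_phi_diff: "mbog_h p c v k = mbog_phi p c v (k + 1) - mbog_phi p c v k"
  unfolding mbog_h_def mbog_phi_succ unfolding mbog_phi_def
  using window_Suc'[of v k p] window_Suc[of v "k - int p" p]
  by (simp add: algebra_simps)

lemma sum_mbog_h_eq_phi_diff:
  "(\<Sum>i<n. mbog_h p c v (m + int i)) = mbog_phi p c v (m + int n) - mbog_phi p c v m"
  using sum_lessThan_telescope[of "\<lambda>i. mbog_phi p c v (m + int i)" n]
  by (simp add: mbog_h_eq_phi_diff ac_simps)

lemma DERIV_prod_relative:
  fixes a g :: "'a \<Rightarrow> real"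
  assumes "finite I"
  shows "((\<lambda>s. \<Prod>i\<in>I. a i + s * (a i * g i)) has_real_derivative prod a I * sum g I) (at 0)"
  using assms
proof (induction I rule: finite_induct)
  case empty
  then show ?case by simp
next
  case (insert x I)
  have "((\<lambda>s. a x + s * (a x * g x)) has_real_derivative a x * g x) (at 0)"
    by (auto intro!: derivative_eq_intros)
  from DERIV_mult[OF this insert.IH] insert.hyps show ?case
    by (simp add: algebra_simps)
qed

lemma DERIV_window_relative:
  "((\<lambda>s. window (\<lambda>k. v k + s * (v k * g k)) m n) has_real_derivative
     window v m n * (\<Sum>i<n. g (m + int i))) (at 0)"
  unfolding window_def
  by (rule DERIV_prod_relative[of "{..<n}" "\<lambda>i. v (m + int i)" "\<lambda>i. g (m + int i)"]) simp

lemma mbog_phi_sums_eq: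
  fixes p :: nat and c :: real and v :: "int \<Rightarrow> real"
  defines "W \<equiv> \<lambda>m. window v m (Suc p)" and "U \<equiv> \<lambda>m. window v m p"
    and "T \<equiv> mbog_T p c v" and "\<phi> \<equiv> mbog_phi p c v"
  shows "(\<Sum>m\<in>{j - int p..j}. W m * (\<phi> (m + int p + 1) - \<phi> m))
           - c * (\<Sum>m\<in>{j - int p + 1..j}. U m * (\<phi> (m + int p) - \<phi> m))
         = (W j - W (j - int p)) * T j
           + (\<Sum>m\<in>{j - int p + 1..j}.
                U m * ((c - v (m + int p)) * T (m + int p) - (c - v (m - 1)) * T (m - 1)))"
proof -
  define X where "X m = U m * W (m + int p)" for m
  have W_mult_phi_diff: "W m * (\<phi> (m + int p + 1) - \<phi> m)
      = W m * T m - W m * T (m + int p) + c * (X m - X (m - int p))" for m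
  proof -
    have \<phi>_diff:
      "\<phi> (m + int p + 1) - \<phi> m = c * (U (m + int p + 1) - U (m - int p)) + T m - T (m + int p)"
      using mbog_phi_succ[of p c v "m + int p"] unfolding \<phi>_def mbog_phi_def[of p c v m]
      by (simp add: W_def U_def T_def algebra_simps)
    show ?thesis
      unfolding \<phi>_diff using window_mult_commute[of v m "Suc p" p]
      by (simp add: X_def W_def U_def algebra_simps)
  qed
  have U_mult_phi_diff: "U m * (\<phi> (m + int p) - \<phi> m)
      = X m - X (m - int p - 1) + U m * T (m - 1) - U m * T (m + int p)" for m
  proof -
    have \<phi>_diff:
      "\<phi> (m + int p) - \<phi> m = W (m + int p) - W (m - int p - 1) + T (m - 1) - T (m + int p)"
      using mbog_phi_succ[of p c v "m - 1"] unfolding \<phi>_def mbog_phi_def[of p c v "m + int p"]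
      by (simp add: W_def U_def T_def algebra_simps)
    show ?thesis
      unfolding \<phi>_diff using window_mult_commute[of v "m - int p - 1" "Suc p" p]
      by (simp add: X_def W_def U_def algebra_simps)
  qed
  have U_mult_T_diff: "U m * ((c - v (m + int p)) * T (m + int p) - (c - v (m - 1)) * T (m - 1))
      = c * (U m * T (m + int p)) - W m * T (m + int p) - c * (U m * T (m - 1)) + W (m - 1) * T (m - 1)" for m
    using window_Suc[of v m p] window_Suc'[of v "m - 1" p]
    by (simp add: W_def U_def algebra_simps)
  have sum_W_T: "(\<Sum>m\<in>{j - int p..j}. W m * T m)
      = (\<Sum>m\<in>{j - int p + 1..j}. W (m - 1) * T (m - 1)) + W j * T j"
    by (rule sum_atLeastAtMost_int_last_shift) simp
  have sum_W_T_shift: "(\<Sum>m\<in>{j - int p..j}. W m * T (m + int p))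
      = W (j - int p) * T j + (\<Sum>m\<in>{j - int p + 1..j}. W m * T (m + int p))"
    using sum_atLeastAtMost_int_head[of "j - int p" j "\<lambda>m. W m * T (m + int p)"] by simp
  have sum_X: "(\<Sum>m\<in>{j - int p..j}. X m) = X (j - int p) + (\<Sum>m\<in>{j - int p + 1..j}. X m)"
    by (rule sum_atLeastAtMost_int_head) simp
  have sum_X_shift: "(\<Sum>m\<in>{j - int p..j}. X (m - int p))
      = (\<Sum>m\<in>{j - int p + 1..j}. X (m - int p - 1)) + X (j - int p)"
    using sum_atLeastAtMost_int_last_shift[of "j - int p" j "\<lambda>m. X (m - int p)"]
    by (simp add: algebra_simps)
  show ?thesis
    unfolding W_mult_phi_diff U_mult_phi_diff U_mult_T_diff
      sum_subtractf sum.distrib sum_distrib_left[symmetric] sum_W_T sum_W_T_shift sum_X sum_X_shift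
    by (simp add: algebra_simps)
qed

lemma DERIV_mbog_T_along_flow:
  "((\<lambda>s. mbog_T p c (\<lambda>k. v k + s * mbog_rhs p c v k) j) has_real_derivative
     (window v j (Suc p) - window v (j - int p) (Suc p)) * mbog_T p c v j
     + (\<Sum>m\<in>{j - int p + 1..j}. window v m p *
         ((c - v (m + int p)) * mbog_T p c v (m + int p) - (c - v (m - 1)) * mbog_T p c v (m - 1))))
   (at 0)"
proof -
  have "((\<lambda>s. window (\<lambda>k. v k + s * mbog_rhs p c v k) m n) has_real_derivative
      window v m n * (mbog_phi p c v (m + int n) - mbog_phi p c v m)) (at 0)" for m n
    using DERIV_window_relative[of v "mbog_h p c v" m n]
    by (simp add: mbog_rhs_eq_mult_h sum_mbog_h_eq_phi_diff)
  then have "((\<lambda>s. mbog_T p c (\<lambda>k. v k + s * mbog_rhs p c v k) j) has_real_derivative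
     (\<Sum>m\<in>{j - int p..j}. window v m (Suc p) * (mbog_phi p c v (m + int p + 1) - mbog_phi p c v m))
     - c * (\<Sum>m\<in>{j - int p + 1..j}. window v m p * (mbog_phi p c v (m + int p) - mbog_phi p c v m)))
   (at 0)"
    unfolding mbog_T_def by (auto intro!: derivative_eq_intros simp: ac_simps)
  then show ?thesis
    unfolding mbog_phi_sums_eq .
qed

lemma mbog_T_plus_b_rhs_eq:
  fixes p :: nat and c :: real and v b d :: "int \<Rightarrow> real"
  assumes hb: "\<And>j. b (j + int p) = b j + 1"
      and hd: "\<And>j. d (j + int p + 1) = d j + c"
  defines "B \<equiv> \<lambda>k. b k * v k - d k"
  shows "(c - v j) * mbog_T p c v j + b j * mbog_rhs p c v j
       = (c - v j) * (\<Sum>m\<in>{j - int p + 1..j}. window v m p * (B (m + int p) - B (m - 1)))"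
proof -
  let ?W = "\<lambda>m. window v m (Suc p)" and ?U = "\<lambda>m. window v m p"
  have U_mult_B_diff: "?U m * (B (m + int p) - B (m - 1))
      = (b m * ?W m - b (m - 1) * ?W (m - 1)) + (?W m - c * ?U m)" for m
    using hb[of m] hd[of "m - 1"] window_Suc[of v m p] window_Suc'[of v "m - 1" p]
    by (simp add: B_def algebra_simps)
  have tel: "(\<Sum>m\<in>{j - int p + 1..j}. b m * ?W m - b (m - 1) * ?W (m - 1))
      = b j * ?W j - b (j - int p) * ?W (j - int p)"
    by (rule sum_atLeastAtMost_int_telescope) simp
  have "(\<Sum>m\<in>{j - int p + 1..j}. ?U m * (B (m + int p) - B (m - 1)))
      = b j * ?W j - b (j - int p) * ?W (j - int p) + (\<Sum>m\<in>{j - int p + 1..j}. ?W m)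
        - c * (\<Sum>m\<in>{j - int p + 1..j}. ?U m)"
    unfolding U_mult_B_diff sum.distrib tel by (simp add: sum_subtractf sum_distrib_left)
  also have "\<dots> = b j * (?W j - ?W (j - int p)) + mbog_T p c v j"
    using sum_atLeastAtMost_int_head[of "j - int p" j ?W] hb[of "j - int p"]
    by (simp add: mbog_T_def algebra_simps)
  finally have sum_eq: "(\<Sum>m\<in>{j - int p + 1..j}. ?U m * (B (m + int p) - B (m - 1)))
      = b j * (?W j - ?W (j - int p)) + mbog_T p c v j" .
  show ?thesis
    unfolding sum_eq mbog_rhs_eq_window_diff by (simp add: algebra_simps)
qed

lemma DERIV_G_constr_along_flow:
  fixes p :: nat and c t :: real and v b d :: "int \<Rightarrow> real"
  assumes hb: "\<And>j. b (j + int p) = b j + 1"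
      and hd: "\<And>j. d (j + int p + 1) = d j + c"
  shows "((\<lambda>s. G_constr p c b d j (t + s) (\<lambda>k. v k + s * mbog_rhs p c v k)) has_real_derivative
           (c - v j) * (\<Sum>m\<in>{j - int p + 1..j}.
              window v m p * (G_constr p c b d (m + int p) t v - G_constr p c b d (m - 1) t v)))
         (at 0)"
proof -
  define F where "F = mbog_rhs p c v"
  define T where "T = mbog_T p c v"
  define B where "B = (\<lambda>k. b k * v k - d k)"
  define S where "S = (\<Sum>m\<in>{j - int p + 1..j}.
    window v m p * ((c - v (m + int p)) * T (m + int p) - (c - v (m - 1)) * T (m - 1)))"
  define SB where "SB = (\<Sum>m\<in>{j - int p + 1..j}. window v m p * (B (m + int p) - B (m - 1)))"
  have dT: "((\<lambda>s. mbog_T p c (\<lambda>k. v k + s * F k) j) has_real_derivative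
      (window v j (Suc p) - window v (j - int p) (Suc p)) * T j + S) (at 0)"
    using DERIV_mbog_T_along_flow[of p c v j] unfolding F_def T_def S_def .
  have "((\<lambda>s. G_constr p c b d j (t + s) (\<lambda>k. v k + s * F k)) has_real_derivative
      ((c - v j) * T j + b j * F j)
      + t * ((c - v j) * ((window v j (Suc p) - window v (j - int p) (Suc p)) * T j + S) - F j * T j)) (at 0)"
    unfolding G_constr_eq_mbog_T T_def
    by (auto intro!: derivative_eq_intros dT[unfolded T_def] simp: algebra_simps)
  also have "(c - v j) * T j + b j * F j = (c - v j) * SB"
    unfolding T_def F_def SB_def B_def
    by (rule mbog_T_plus_b_rhs_eq[where p=p and c=c and b=b and d=d, OF hb hd])
  also have "(c - v j) * ((window v j (Suc p) - window v (j - int p) (Suc p)) * T j + S) - F j * T j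
      = (c - v j) * S"
    by (simp add: F_def mbog_rhs_eq_window_diff algebra_simps)
  also have "(c - v j) * SB + t * ((c - v j) * S) = (c - v j) * (\<Sum>m\<in>{j - int p + 1..j}.
      window v m p * (G_constr p c b d (m + int p) t v - G_constr p c b d (m - 1) t v))"
    unfolding G_constr_eq_mbog_T SB_def S_def B_def T_def sum_distrib_left
    by (simp add: sum.distrib[symmetric] algebra_simps)
  finally show ?thesis
    unfolding F_def .
qed

theorem mainTheorem7:
  fixes p :: nat and c :: real and b d :: "int \<Rightarrow> real"
  assumes hb: "\<And>j. b (j + int p) = b j + 1"
      and hd: "\<And>j. d (j + int p + 1) = d j + c"
  shows "\<forall>j t v. (\<forall>k. G_constr p c b d k t v = 0) \<longrightarrow>
           ((\<lambda>s. G_constr p c b d j (t + s) (\<lambda>k. v k + s * mbog_rhs p c v k))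
              has_real_derivative 0) (at 0)"
proof (intro allI impI)
  fix j t v
  assume "\<forall>k. G_constr p c b d k t v = 0"
  then show "((\<lambda>s. G_constr p c b d j (t + s) (\<lambda>k. v k + s * mbog_rhs p c v k))
      has_real_derivative 0) (at 0)"
    using DERIV_G_constr_along_flow[where p=p and c=c and b=b and d=d and j=j and t=t and v=v, OF hb hd]
    by simp
qed

end
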